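(* Assume $\beta>0$ and $\zeta_l+\zeta_r>0$. Then every eigenvalue of the linear map $l$ on $M_N(\mathbb{C})$ has strictly negative real part. In particular $l$ is invertible and $\lim_{t\to\infty}e^{tl}=0$.
   Context: Fix an integer $N\ge 2$ and a bounded function $v:\mathbb{N}=\{1,2,\dots\}\to\mathbb{R}$. Let $e_1,\dots,e_N$ be the standard basis of $\mathbb{C}^N$ and $p_n=|e_n\rangle\langle e_n|$. Let $h$ be the Hermitian $N\times N$ matrix $(h\psi)(n)=-\psi(n+1)-\psi(n-1)+v(n)\psi(n)$, $n=1,\dots,N$, with the convention $\psi(0)=\psi(N+1)=0$. Let $\alpha_{in}^l,\alpha_{out}^l,\alpha_{in}^r,\alpha_{out}^r,\beta\ge 0$ be real numbers and put $\zeta_l=\alpha_{in}^l+\alpha_{out}^l$, $\zeta_r=\alpha_{in}^r+\alpha_{out}^r$. Define the linear map $l:M_N(\mathbb{C})\to M_N(\mathbb{C})$ by $l(a)=-i[h,a]-\{\zeta_l p_1+\zeta_r p_N,a\}+\beta\left(\sum_{n=1}^N p_nap_n-a\right)$, where $[x,y]=xy-yx$ and $\{x,y\}=xy+yx$. *)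

theory Defs
  imports "HOL-Analysis.Analysis"
begin

text \<open>N x N complex matrices are modelled as complex^'n^'n with N = CARD('n).
  The basis vectors e_1..e_N are enumerated through a bijection idx : 'n -> {1..N}.\<close>

definition cscale :: "complex \<Rightarrow> complex^'n^'n \<Rightarrow> complex^'n^'n" where
  "cscale c a = (\<chi> i j. c * a $ i $ j)"

definition proj :: "('n \<Rightarrow> nat) \<Rightarrow> nat \<Rightarrow> complex^'n^'n" where
  "proj idx n = (\<chi> i j. if i = j \<and> idx i = n then 1 else 0)"

text \<open>(h psi)(n) = - psi(n+1) - psi(n-1) + v(n) psi(n), Dirichlet boundary conditions\<close>
definition hmat :: "('n \<Rightarrow> nat) \<Rightarrow> (nat \<Rightarrow> real) \<Rightarrow> complex^'n^'n" where
  "hmat idx v = (\<chi> i j. (if i = j then complex_of_real (v (idx i)) else 0)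
                        - (if idx j = idx i + 1 \<or> idx i = idx j + 1 then 1 else 0))"

definition lmap :: "('n::finite \<Rightarrow> nat) \<Rightarrow> (nat \<Rightarrow> real) \<Rightarrow> real \<Rightarrow> real \<Rightarrow> real
                     \<Rightarrow> complex^'n^'n \<Rightarrow> complex^'n^'n" where
  "lmap idx v zl zr \<beta> a =
     cscale (- \<i>) (hmat idx v ** a - a ** hmat idx v)
     - (let P = cscale (complex_of_real zl) (proj idx 1)
              + cscale (complex_of_real zr) (proj idx CARD('n))
        in P ** a + a ** P)
     + cscale (complex_of_real \<beta>) ((\<Sum>n\<in>{1..CARD('n)}. proj idx n ** a ** proj idx n) - a)"

definition is_eigenvalue :: "(complex^'n^'n \<Rightarrow> complex^'n^'n) \<Rightarrow> complex \<Rightarrow> bool" where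
  "is_eigenvalue f c \<longleftrightarrow> (\<exists>a. a \<noteq> 0 \<and> f a = cscale c a)"

definition op_exp :: "real \<Rightarrow> ('a::real_normed_vector \<Rightarrow> 'a) \<Rightarrow> 'a \<Rightarrow>\<^sub>L 'a" where
  "op_exp t f = (\<Sum>k. (t ^ k / fact k) *\<^sub>R (((\<lambda>A. A o\<^sub>L Blinfun f) ^^ k) id_blinfun))"

end

theory Submission
  imports Defs
begin

text \<open>
  For the Hilbert--Schmidt inner product, \<open>Re \<langle>a, l a\<rangle> = - Q a\<close> with
  \<open>Q a = \<Sum>i j. (w i + w j + \<beta> [i \<noteq> j]) |a i j|\<^sup>2 \<ge> 0\<close>, where \<open>w\<close> are the boundary rates
  \<open>\<zeta>\<^sub>l\<close>, \<open>\<zeta>\<^sub>r\<close> at sites \<open>1\<close>, \<open>N\<close>: the commutator with the Hermitian \<open>h\<close> contributes nothing.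
  If \<open>Q a = Q (l a) = 0\<close>, then \<open>\<beta> > 0\<close> makes \<open>a\<close> diagonal, the off-diagonal entries of \<open>l a\<close>
  produced by the hopping terms of \<open>h\<close> force the diagonal to be constant along the chain, and a
  positive boundary rate makes it vanish. For an eigenvector this excludes \<open>Re c \<ge> 0\<close>. For the
  semigroup, \<open>W = |z|\<^sup>2 + |l z|\<^sup>2\<close> is a Lyapunov function along \<open>z' = l z\<close>:
  \<open>W' = -2 (Q z + Q (l z))\<close>, which by compactness of the unit sphere is at most \<open>-\<kappa> W\<close>,
  so \<open>e\<^sup>t\<^sup>l\<close> decays exponentially.
\<close>

section \<open>Bounded operators as a Banach algebra\<close>

text \<open>A copy of \<open>'a \<Rightarrow>\<^sub>L 'a\<close> with composition as multiplication, so that the library's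
  exponential and its derivative apply to \<open>op_exp\<close>.\<close>

typedef (overloaded) 'a bop = "UNIV :: ('a::euclidean_space \<Rightarrow>\<^sub>L 'a) set"
  morphisms blinfun_of_bop bop_of_blinfun by simp

setup_lifting type_definition_bop

instantiation bop :: (euclidean_space) real_normed_algebra_1
begin
lift_definition norm_bop :: "'a bop \<Rightarrow> real" is norm .
lift_definition minus_bop :: "'a bop \<Rightarrow> 'a bop \<Rightarrow> 'a bop" is "(-)" .
lift_definition plus_bop :: "'a bop \<Rightarrow> 'a bop \<Rightarrow> 'a bop" is "(+)" .
lift_definition uminus_bop :: "'a bop \<Rightarrow> 'a bop" is "uminus" .
lift_definition zero_bop :: "'a bop" is "0" .
lift_definition one_bop :: "'a bop" is "id_blinfun" .
lift_definition times_bop :: "'a bop \<Rightarrow> 'a bop \<Rightarrow> 'a bop" is "(o\<^sub>L)" .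
lift_definition scaleR_bop :: "real \<Rightarrow> 'a bop \<Rightarrow> 'a bop" is "scaleR" .
definition dist_bop :: "'a bop \<Rightarrow> 'a bop \<Rightarrow> real" where "dist_bop a b = norm (a - b)"
definition uniformity_bop :: "('a bop \<times> 'a bop) filter" where
  "uniformity_bop = (INF e\<in>{0 <..}. principal {(x, y). dist x y < e})"
definition open_bop :: "'a bop set \<Rightarrow> bool"
  where "open_bop S = (\<forall>x\<in>S. \<forall>\<^sub>F (x', y) in uniformity. x' = x \<longrightarrow> y \<in> S)"
definition sgn_bop :: "'a bop \<Rightarrow> 'a bop" where "sgn_bop x = scaleR (inverse (norm x)) x"
instance
proof
  fix a b c :: "'a bop" and r s :: real
  show "a * b * c = a * (b * c)" by transfer (auto intro: blinfun_eqI)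
  show "(a + b) * c = a * c + b * c"
    by transfer (simp add: bounded_bilinear.add_left[OF bounded_bilinear_blinfun_compose])
  show "a * (b + c) = a * b + a * c"
    by transfer (simp add: bounded_bilinear.add_right[OF bounded_bilinear_blinfun_compose])
  show "1 * a = a" by transfer (auto intro: blinfun_eqI)
  show "a * 1 = a" by transfer (auto intro: blinfun_eqI)
  show "(0::'a bop) \<noteq> 1"
    by transfer (metis norm_blinfun_id norm_zero zero_neq_one)
  show "scaleR r a * b = scaleR r (a * b)"
    by transfer (simp add: bounded_bilinear.scaleR_left[OF bounded_bilinear_blinfun_compose])
  show "a * scaleR r b = scaleR r (a * b)"
    by transfer (simp add: bounded_bilinear.scaleR_right[OF bounded_bilinear_blinfun_compose])
  show "norm (a * b) \<le> norm a * norm b" by transfer (rule norm_blinfun_compose)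
  show "norm (1::'a bop) = 1" by transfer simp
  show "a + b + c = a + (b + c)" by transfer simp
  show "a + b = b + a" by transfer simp
  show "0 + a = a" by transfer simp
  show "- a + a = 0" by transfer simp
  show "a - b = a + - b" by transfer simp
  show "r *\<^sub>R (a + b) = r *\<^sub>R a + r *\<^sub>R b" by transfer (simp add: scaleR_right_distrib)
  show "(r + s) *\<^sub>R a = r *\<^sub>R a + s *\<^sub>R a" by transfer (simp add: scaleR_left_distrib)
  show "r *\<^sub>R s *\<^sub>R a = (r * s) *\<^sub>R a" by transfer simp
  show "1 *\<^sub>R a = a" by transfer simp
  show "dist a b = norm (a - b)" by (simp add: dist_bop_def)
  show "sgn a = inverse (norm a) *\<^sub>R a" by (simp add: sgn_bop_def)
  show "(uniformity :: ('a bop \<times> 'a bop) filter) = (INF e\<in>{0 <..}. principal {(x, y). dist x y < e})"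
    by (simp add: uniformity_bop_def)
  show "open (U :: 'a bop set) = (\<forall>x\<in>U. \<forall>\<^sub>F (x', y) in uniformity. x' = x \<longrightarrow> y \<in> U)" for U
    by (simp add: open_bop_def)
  show "(norm a = 0) = (a = 0)" by transfer simp
  show "norm (a + b) \<le> norm a + norm b" by transfer (rule norm_triangle_ineq)
  show "norm (r *\<^sub>R a) = \<bar>r\<bar> * norm a" by transfer simp
qed
end

lemma norm_blinfun_of_bop_diff: "norm (blinfun_of_bop a - blinfun_of_bop b) = norm (a - b)"
  by transfer simp

instance bop :: (euclidean_space) banach
proof
  fix X :: "nat \<Rightarrow> 'a bop"
  assume "Cauchy X"
  then have "Cauchy (\<lambda>n. blinfun_of_bop (X n))"
    unfolding Cauchy_def dist_norm norm_blinfun_of_bop_diff .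
  then obtain L where "(\<lambda>n. blinfun_of_bop (X n)) \<longlonglongrightarrow> L"
    using convergent_eq_Cauchy convergent_def by blast
  then have "X \<longlonglongrightarrow> bop_of_blinfun L"
    unfolding tendsto_iff dist_norm norm_blinfun_of_bop_diff[symmetric]
    by (simp add: bop_of_blinfun_inverse)
  then show "convergent X" unfolding convergent_def by blast
qed

lemma bounded_linear_blinfun_of_bop: "bounded_linear blinfun_of_bop"
proof
  fix a b :: "'a::euclidean_space bop" and r :: real
  show "blinfun_of_bop (a + b) = blinfun_of_bop a + blinfun_of_bop b" by transfer simp
  show "blinfun_of_bop (r *\<^sub>R a) = r *\<^sub>R blinfun_of_bop a" by transfer simp
  show "\<exists>K. \<forall>x::'a bop. norm (blinfun_of_bop x) \<le> norm x * K" by (rule exI[of _ 1]) (transfer, simp)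
qed

lemma blinfun_of_bop_mult: "blinfun_of_bop (a * b) = blinfun_of_bop a o\<^sub>L blinfun_of_bop b"
  by transfer simp

lemma blinfun_of_bop_scaleR: "blinfun_of_bop (r *\<^sub>R a) = r *\<^sub>R blinfun_of_bop a"
  by transfer simp

lemma blinfun_of_bop_one: "blinfun_of_bop 1 = id_blinfun"
  by transfer simp

lemma blinfun_of_bop_power:
  "blinfun_of_bop (bop_of_blinfun B ^ k) = ((\<lambda>A. A o\<^sub>L B) ^^ k) id_blinfun"
proof (induction k)
  case (Suc k)
  have "bop_of_blinfun B ^ Suc k = bop_of_blinfun B ^ k * bop_of_blinfun B" by (rule power_Suc2)
  then show ?case using Suc by (simp add: blinfun_of_bop_mult bop_of_blinfun_inverse)
qed (simp add: blinfun_of_bop_one)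

lemma op_exp_eq_exp:
  fixes f :: "'a::euclidean_space \<Rightarrow> 'a"
  shows "op_exp t f = blinfun_of_bop (exp (t *\<^sub>R bop_of_blinfun (Blinfun f)))"
proof -
  have "blinfun_of_bop (exp (t *\<^sub>R bop_of_blinfun (Blinfun f)))
      = (\<Sum>n. blinfun_of_bop ((t *\<^sub>R bop_of_blinfun (Blinfun f)) ^ n /\<^sub>R fact n))"
    unfolding exp_def
    by (rule bounded_linear.suminf[OF bounded_linear_blinfun_of_bop summable_exp_generic])
  also have "\<dots> = op_exp t f"
    unfolding op_exp_def
    by (simp add: blinfun_of_bop_scaleR
        blinfun_of_bop_power divide_inverse mult.commute)
  finally show ?thesis ..
qed

lemma op_exp_0: "op_exp 0 (f :: 'a::euclidean_space \<Rightarrow> 'a) = id_blinfun"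
  by (simp add: op_exp_eq_exp blinfun_of_bop_one)

lemma op_exp_has_vector_derivative:
  fixes f :: "'a::euclidean_space \<Rightarrow> 'a"
  assumes "bounded_linear f"
  shows "((\<lambda>t. op_exp t f x) has_vector_derivative f (op_exp s f x)) (at s)"
proof -
  define A where "A = bop_of_blinfun (Blinfun f)"
  have apply_at_x: "bounded_linear (\<lambda>y. blinfun_of_bop y x)"
    by (rule bounded_linear_compose[OF blinfun.bounded_linear_left bounded_linear_blinfun_of_bop])
  have "((\<lambda>t. blinfun_of_bop (exp (t *\<^sub>R A)) x) has_vector_derivative
          blinfun_of_bop (A * exp (s *\<^sub>R A)) x) (at s)"
    by (rule bounded_linear.has_vector_derivative[OF apply_at_x exp_scaleR_has_vector_derivative_left])
  moreover have "blinfun_of_bop (A * exp (s *\<^sub>R A)) x = f (op_exp s f x)"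
    using assms by (simp add: A_def op_exp_eq_exp blinfun_of_bop_mult bop_of_blinfun_inverse
        bounded_linear_Blinfun_apply)
  ultimately show ?thesis by (simp add: A_def op_exp_eq_exp)
qed

section \<open>Hypocoercive generators\<close>

lemma exp_decay_if_derivative_bound:
  fixes W :: "real \<Rightarrow> real"
  assumes W': "\<And>s. (W has_real_derivative W' s) (at s)"
    and decay: "\<And>s. W' s \<le> - \<kappa> * W s"
    and "t \<ge> 0"
  shows "W t \<le> exp (- \<kappa> * t) * W 0"
proof -
  define G where "G s = exp (\<kappa> * s) * W s" for s
  have "(G has_real_derivative exp (\<kappa> * s) * (\<kappa> * W s + W' s)) (at s)" for s
    unfolding G_def by (auto intro!: derivative_eq_intros W' simp: algebra_simps)
  moreover have "exp (\<kappa> * s) * (\<kappa> * W s + W' s) \<le> 0" for s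
    using decay[of s] by (intro mult_nonneg_nonpos) auto
  ultimately have "G t \<le> G 0"
    using DERIV_nonpos_imp_nonincreasing[of 0 t G] \<open>t \<ge> 0\<close> by blast
  then show ?thesis
    by (simp add: G_def exp_minus field_simps)
qed

lemma quadratically_homogeneous_lower_bound:
  fixes f :: "'a::euclidean_space \<Rightarrow> real"
  assumes cont: "continuous_on (sphere 0 1) f"
    and homogeneous: "\<And>r u. f (r *\<^sub>R u) = r\<^sup>2 * f u"
    and pos: "\<And>u. u \<noteq> 0 \<Longrightarrow> f u > 0"
  obtains c where "c > 0" and "\<And>u. c * (norm u)\<^sup>2 \<le> f u"
proof -
  have "sphere (0::'a) 1 \<noteq> {}" by simp
  then obtain u0 where u0: "u0 \<in> sphere 0 1" and min: "\<And>u. u \<in> sphere 0 1 \<Longrightarrow> f u0 \<le> f u"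
    using continuous_attains_inf[OF compact_sphere _ cont] by blast
  have "f u0 > 0" using u0 by (intro pos) auto
  moreover have "f u0 * (norm u)\<^sup>2 \<le> f u" for u
  proof (cases "u = 0")
    case True
    then show ?thesis using homogeneous[of 0 u] by simp
  next
    case False
    then have "f u0 \<le> f (inverse (norm u) *\<^sub>R u)" by (intro min) simp
    moreover have "f u = (norm u)\<^sup>2 * f (inverse (norm u) *\<^sub>R u)"
      using False homogeneous[of "norm u" "inverse (norm u) *\<^sub>R u"] by simp
    ultimately show ?thesis
      by (metis mult.commute mult_right_mono zero_le_power2)
  qed
  ultimately show thesis by (rule that)
qed

locale hypocoercive =
  fixes L :: "'a::euclidean_space \<Rightarrow> 'a"
  assumes linear: "linear L"
    and dissipative: "\<And>u. inner u (L u) \<le> 0"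
    and no_invariant_kernel: "\<And>u. inner u (L u) = 0 \<Longrightarrow> inner (L u) (L (L u)) = 0 \<Longrightarrow> u = 0"
begin

lemma bounded_linear: "bounded_linear L"
  using linear by (simp add: linear_conv_bounded_linear)

lemma bij: "bij L"
proof -
  have "u = 0" if "L u = 0" for u
    using no_invariant_kernel[of u] that linear_0[OF linear] by simp
  then have "inj L" by (simp add: linear_inj_iff_eq_0[OF linear])
  then show ?thesis using linear_inj_imp_surj[OF linear] by (simp add: bij_def)
qed

lemma coercive_bound:
  obtains c where "c > 0" and "\<And>u. c * (norm u)\<^sup>2 \<le> - inner u (L u) - inner (L u) (L (L u))"
proof -
  define \<Phi> where "\<Phi> u = - inner u (L u) - inner (L u) (L (L u))" for u
  have L_continuous: "continuous_on S (\<lambda>u. L (f u))" if "continuous_on S f" for S and f :: "'a \<Rightarrow> 'a"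
    using that linear by (rule linear_continuous_on_compose)
  have "continuous_on (sphere 0 1) \<Phi>"
    unfolding \<Phi>_def by (intro continuous_intros L_continuous)
  moreover have "\<Phi> (r *\<^sub>R u) = r\<^sup>2 * \<Phi> u" for r u
    by (simp add: \<Phi>_def linear_scale[OF linear] power2_eq_square algebra_simps)
  moreover have "\<Phi> u > 0" if "u \<noteq> 0" for u
  proof (rule ccontr)
    assume "\<not> \<Phi> u > 0"
    then have "inner u (L u) = 0" "inner (L u) (L (L u)) = 0"
      using dissipative[of u] dissipative[of "L u"] unfolding \<Phi>_def by linarith+
    with that show False using no_invariant_kernel by blast
  qed
  ultimately obtain c where "c > 0" "\<And>u. c * (norm u)\<^sup>2 \<le> \<Phi> u"
    using quadratically_homogeneous_lower_bound by blast
  then show thesis unfolding \<Phi>_def by (rule that)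
qed

lemma lyapunov_has_real_derivative:
  fixes x :: 'a
  defines "z \<equiv> \<lambda>s. op_exp s L x"
  shows "((\<lambda>s. (norm (z s))\<^sup>2 + (norm (L (z s)))\<^sup>2) has_real_derivative
           2 * (inner (z s) (L (z s)) + inner (L (z s)) (L (L (z s))))) (at s)"
proof -
  have z': "(z has_vector_derivative L (z s)) (at s)" for s
    unfolding z_def by (rule op_exp_has_vector_derivative[OF bounded_linear])
  have Lz': "((\<lambda>s. L (z s)) has_vector_derivative L (L (z s))) (at s)" for s
    by (rule bounded_linear.has_vector_derivative[OF bounded_linear z'])
  have "((\<lambda>s. (norm (z s))\<^sup>2 + (norm (L (z s)))\<^sup>2) has_vector_derivative
      (inner (z s) (L (z s)) + inner (L (z s)) (z s))
      + (inner (L (z s)) (L (L (z s))) + inner (L (L (z s))) (L (z s)))) (at s)"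
    unfolding power2_norm_eq_inner
    by (intro has_vector_derivative_add
        bounded_bilinear.has_vector_derivative[OF bounded_bilinear_inner z' z']
        bounded_bilinear.has_vector_derivative[OF bounded_bilinear_inner Lz' Lz'])
  then show ?thesis
    by (simp add: inner_commute has_real_derivative_iff_has_vector_derivative)
qed

lemma op_exp_square_decay:
  obtains C \<kappa> where "C > 0" and "\<kappa> > 0"
    and "\<And>t x. t \<ge> 0 \<Longrightarrow> (norm (op_exp t L x))\<^sup>2 \<le> C * exp (- \<kappa> * t) * (norm x)\<^sup>2"
proof -
  obtain c where "c > 0" and c: "\<And>u. c * (norm u)\<^sup>2 \<le> - inner u (L u) - inner (L u) (L (L u))"
    using coercive_bound by blast
  define K where "K = onorm L"
  have L_le: "(norm (L u))\<^sup>2 \<le> K\<^sup>2 * (norm u)\<^sup>2" for u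
    unfolding K_def power_mult_distrib[symmetric]
    by (intro power_mono onorm bounded_linear) simp
  define \<kappa> where "\<kappa> = 2 * c / (1 + K\<^sup>2)"
  have K_pos: "1 + K\<^sup>2 > 0" by (simp add: add_pos_nonneg)
  moreover have "\<kappa> > 0" unfolding \<kappa>_def using \<open>c > 0\<close> K_pos by simp
  moreover have "(norm (op_exp t L x))\<^sup>2 \<le> (1 + K\<^sup>2) * exp (- \<kappa> * t) * (norm x)\<^sup>2"
    if "t \<ge> 0" for t x
  proof -
    define z where "z t = op_exp t L x" for t
    define W where "W s = (norm (z s))\<^sup>2 + (norm (L (z s)))\<^sup>2" for s
    have W_bounds: "(norm (z s))\<^sup>2 \<le> W s" "W s \<le> (1 + K\<^sup>2) * (norm (z s))\<^sup>2" for s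
      unfolding W_def using L_le[of "z s"] by (simp_all add: algebra_simps)
    have "(W has_real_derivative 2 * (inner (z s) (L (z s)) + inner (L (z s)) (L (L (z s))))) (at s)"
      for s
      unfolding W_def z_def by (rule lyapunov_has_real_derivative)
    moreover have "2 * (inner (z s) (L (z s)) + inner (L (z s)) (L (L (z s)))) \<le> - \<kappa> * W s" for s
    proof -
      have "\<kappa> * W s \<le> 2 * c * (norm (z s))\<^sup>2"
        using mult_left_mono[OF W_bounds(2)[of s], of \<kappa>] \<open>\<kappa> > 0\<close> K_pos
        by (simp add: \<kappa>_def)
      then show ?thesis using c[of "z s"] by simp
    qed
    ultimately have "W t \<le> exp (- \<kappa> * t) * W 0"
      by (rule exp_decay_if_derivative_bound) (rule \<open>t \<ge> 0\<close>)
    then have "(norm (op_exp t L x))\<^sup>2 \<le> exp (- \<kappa> * t) * W 0"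
      using W_bounds(1)[of t] by (simp add: z_def)
    also have "\<dots> \<le> exp (- \<kappa> * t) * ((1 + K\<^sup>2) * (norm x)\<^sup>2)"
      using W_bounds(2)[of 0] by (simp add: z_def op_exp_0)
    finally show ?thesis
      by (simp add: algebra_simps)
  qed
  ultimately show thesis by (rule that)
qed

lemma op_exp_tendsto_zero: "((\<lambda>t. op_exp t L) \<longlongrightarrow> 0) at_top"
proof -
  obtain C \<kappa> where "C > 0" "\<kappa> > 0"
    and decay: "\<And>t x. t \<ge> 0 \<Longrightarrow> (norm (op_exp t L x))\<^sup>2 \<le> C * exp (- \<kappa> * t) * (norm x)\<^sup>2"
    using op_exp_square_decay by blast
  have "norm (op_exp t L) \<le> sqrt (C * exp (- \<kappa> * t))" if "t \<ge> 0" for t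
  proof (rule norm_blinfun_bound)
    show "sqrt (C * exp (- \<kappa> * t)) \<ge> 0" using \<open>C > 0\<close> by simp
    fix x
    have "norm (op_exp t L x) \<le> sqrt (C * exp (- \<kappa> * t) * (norm x)\<^sup>2)"
      using decay[OF that] by (rule real_le_rsqrt)
    then show "norm (op_exp t L x) \<le> sqrt (C * exp (- \<kappa> * t)) * norm x"
      by (simp add: real_sqrt_mult)
  qed
  then have "\<forall>\<^sub>F t in at_top. norm (op_exp t L) \<le> sqrt (C * exp (- \<kappa> * t))"
    unfolding eventually_at_top_linorder by blast
  moreover have "((\<lambda>t. sqrt (C * exp (- \<kappa> * t))) \<longlongrightarrow> 0) at_top"
  proof -
    have "((\<lambda>t. exp (- \<kappa> * t)) \<longlongrightarrow> 0) at_top"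
      using \<open>\<kappa> > 0\<close>
      by (intro filterlim_compose[OF exp_at_bot] filterlim_tendsto_neg_mult_at_bot[OF tendsto_const])
        (auto simp: filterlim_ident)
    from tendsto_real_sqrt[OF tendsto_mult_right_zero[OF this, of C]] show ?thesis by simp
  qed
  ultimately show ?thesis by (rule Lim_null_comparison)
qed

end

section \<open>The dissipative chain\<close>

lemma cscale_entry [simp]: "cscale c a $ i $ j = c * a $ i $ j"
  by (simp add: cscale_def)

lemma proj_mult_entry: "(proj idx n ** a) $ i $ j = (if idx i = n then a $ i $ j else 0)"
  by (simp add: matrix_matrix_mult_def proj_def if_distrib[of "\<lambda>x. x * _"] cong: if_cong)

lemma mult_proj_entry: "(a ** proj idx n) $ i $ j = (if idx j = n then a $ i $ j else 0)"
proof -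
  have "(a ** proj idx n) $ i $ j = (\<Sum>k\<in>UNIV. if k = j then (if idx j = n then a $ i $ j else 0) else 0)"
    unfolding matrix_matrix_mult_def proj_def vec_lambda_beta by (intro sum.cong) auto
  then show ?thesis by simp
qed

lemma diagonal_mult_entry:
  assumes "\<And>i k. P $ i $ k = (if i = k then d i else 0)"
  shows "(P ** a) $ i $ j = d i * a $ i $ j"
proof -
  have "(P ** a) $ i $ j = (\<Sum>k\<in>UNIV. if k = i then d i * a $ i $ j else 0)"
    unfolding matrix_matrix_mult_def vec_lambda_beta using assms by (intro sum.cong) auto
  then show ?thesis by simp
qed

lemma mult_diagonal_entry:
  assumes "\<And>i k. P $ i $ k = (if i = k then d i else 0)"
  shows "(a ** P) $ i $ j = a $ i $ j * d j"
proof -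
  have "(a ** P) $ i $ j = (\<Sum>k\<in>UNIV. if k = j then a $ i $ j * d j else 0)"
    unfolding matrix_matrix_mult_def vec_lambda_beta using assms by (intro sum.cong) auto
  then show ?thesis by simp
qed

lemma hmat_sym: "hmat idx v $ i $ k = hmat idx v $ k $ i"
  by (auto simp: hmat_def)

lemma cnj_hmat [simp]: "cnj (hmat idx v $ i $ k) = hmat idx v $ i $ k"
  by (simp add: hmat_def)

definition boundary_rate :: "('n::finite \<Rightarrow> nat) \<Rightarrow> real \<Rightarrow> real \<Rightarrow> 'n \<Rightarrow> real" where
  "boundary_rate idx zl zr i = (if idx i = 1 then zl else 0) + (if idx i = CARD('n) then zr else 0)"

lemma lmap_entry:
  fixes idx :: "'n::finite \<Rightarrow> nat"
  assumes idx: "bij_betw idx UNIV {1..CARD('n)}"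
  shows "lmap idx v zl zr \<beta> a $ i $ j =
     - \<i> * ((\<Sum>k\<in>UNIV. hmat idx v $ i $ k * a $ k $ j) - (\<Sum>k\<in>UNIV. a $ i $ k * hmat idx v $ k $ j))
     - complex_of_real (boundary_rate idx zl zr i + boundary_rate idx zl zr j) * a $ i $ j
     + complex_of_real \<beta> * ((if i = j then a $ i $ j else 0) - a $ i $ j)"
proof -
  have inj: "inj idx" and range: "idx i \<in> {1..CARD('n)}" for i
    using idx by (auto simp: bij_betw_def)
  have dephasing: "(\<Sum>n\<in>{1..CARD('n)}. proj idx n ** a ** proj idx n) $ i $ j
      = (if i = j then a $ i $ j else 0)"
  proof -
    have "(\<Sum>n\<in>{1..CARD('n)}. proj idx n ** a ** proj idx n) $ i $ j
        = (\<Sum>n\<in>{1..CARD('n)}. if n = idx i then (if idx j = idx i then a $ i $ j else 0) else 0)"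
      unfolding sum_component by (intro sum.cong) (auto simp: proj_mult_entry mult_proj_entry)
    also have "\<dots> = (if idx j = idx i then a $ i $ j else 0)"
      using range[of i] by simp
    finally show ?thesis
      using inj by (auto dest: injD)
  qed
  let ?P = "cscale (complex_of_real zl) (proj idx 1) + cscale (complex_of_real zr) (proj idx CARD('n))"
  have P: "?P $ i $ k = (if i = k then complex_of_real (boundary_rate idx zl zr i) else 0)" for i k
    by (simp add: proj_def boundary_rate_def)
  have boundary: "(let P = ?P in P ** a + a ** P) $ i $ j
      = complex_of_real (boundary_rate idx zl zr i + boundary_rate idx zl zr j) * a $ i $ j"
    unfolding Let_def vector_add_component diagonal_mult_entry[OF P] mult_diagonal_entry[OF P]
    by (simp add: algebra_simps)
  show ?thesis
    unfolding lmap_def vector_add_component vector_minus_component cscale_entry dephasing boundary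
    by (simp add: matrix_matrix_mult_def)
qed

lemma lmap_add:
  fixes idx :: "'n::finite \<Rightarrow> nat"
  assumes "bij_betw idx UNIV {1..CARD('n)}"
  shows "lmap idx v zl zr \<beta> (a + b) = lmap idx v zl zr \<beta> a + lmap idx v zl zr \<beta> (b :: complex^'n^'n)"
  unfolding vec_eq_iff by (simp add: lmap_entry[OF assms] sum.distrib algebra_simps)

lemma lmap_cscale:
  fixes idx :: "'n::finite \<Rightarrow> nat"
  assumes "bij_betw idx UNIV {1..CARD('n)}"
  shows "lmap idx v zl zr \<beta> (cscale c a) = cscale c (lmap idx v zl zr \<beta> (a :: complex^'n^'n))"
  unfolding vec_eq_iff by (simp add: lmap_entry[OF assms] sum_distrib_left algebra_simps)

lemma scaleR_eq_cscale: "r *\<^sub>R a = cscale (complex_of_real r) a"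
  unfolding vec_eq_iff by (simp add: scaleR_conv_of_real[where 'a=complex])

lemma lmap_linear:
  fixes idx :: "'n::finite \<Rightarrow> nat"
  assumes "bij_betw idx UNIV {1..CARD('n)}"
  shows "linear (lmap idx v zl zr \<beta> :: complex^'n^'n \<Rightarrow> _)"
  by (rule linearI) (simp_all add: lmap_add[OF assms] lmap_cscale[OF assms] scaleR_eq_cscale)

lemma inner_matrix:
  "inner (a::complex^'n::finite^'n) b = (\<Sum>i\<in>UNIV. \<Sum>j\<in>UNIV. Re (cnj (a$i$j) * b$i$j))"
  by (simp add: inner_vec_def inner_complex_def)

lemma inner_cscale_self: "inner (a::complex^'n::finite^'n) (cscale c a) = Re c * inner a a"
proof -
  have "Re (cnj x * (c * x)) = Re c * Re (cnj x * x)" for x :: complex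
    by (simp add: algebra_simps)
  then show ?thesis unfolding inner_matrix cscale_entry sum_distrib_left by simp
qed

lemma Im_sum_sum_hermitian:
  fixes F :: "'a \<Rightarrow> 'a \<Rightarrow> complex"
  assumes "\<And>i k. cnj (F i k) = F k i"
  shows "Im (\<Sum>i\<in>A. \<Sum>k\<in>A. F i k) = 0"
proof -
  have "cnj (\<Sum>i\<in>A. \<Sum>k\<in>A. F i k) = (\<Sum>i\<in>A. \<Sum>k\<in>A. F k i)"
    by (simp add: assms)
  also have "\<dots> = (\<Sum>i\<in>A. \<Sum>k\<in>A. F i k)"
    by (rule sum.swap)
  finally show ?thesis
    by (metis cnj.sel(2) neg_equal_zero)
qed

lemma inner_commutator_hermitian_eq_0:
  fixes a H :: "complex^'n::finite^'n"
  assumes hermitian: "\<And>i k. cnj (H $ i $ k) = H $ k $ i"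
  shows "(\<Sum>i\<in>UNIV. \<Sum>j\<in>UNIV. Re (cnj (a$i$j) *
           (- \<i> * ((\<Sum>k\<in>UNIV. H$i$k * a$k$j) - (\<Sum>k\<in>UNIV. a$i$k * H$k$j))))) = 0"
proof -
  define left where "left = (\<Sum>i\<in>UNIV. \<Sum>j\<in>UNIV. cnj (a$i$j) * (\<Sum>k\<in>UNIV. H$i$k * a$k$j))"
  define right where "right = (\<Sum>i\<in>UNIV. \<Sum>j\<in>UNIV. cnj (a$i$j) * (\<Sum>k\<in>UNIV. a$i$k * H$k$j))"
  have left_eq: "left = (\<Sum>i\<in>UNIV. \<Sum>k\<in>UNIV. (\<Sum>j\<in>UNIV. cnj (a$i$j) * a$k$j) * H$i$k)"
    unfolding left_def sum_distrib_left sum_distrib_right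
    by (intro sum.cong refl trans[OF sum.swap]) (simp add: ac_simps)
  have right_eq: "right = (\<Sum>j\<in>UNIV. \<Sum>k\<in>UNIV. (\<Sum>i\<in>UNIV. cnj (a$i$j) * a$i$k) * H$k$j)"
    unfolding right_def sum_distrib_left sum_distrib_right
    by (rule trans[OF sum.swap]) (intro sum.cong refl trans[OF sum.swap], simp add: ac_simps)
  have "Im left = 0"
    unfolding left_eq by (rule Im_sum_sum_hermitian) (auto simp: hermitian mult.commute)
  moreover have "Im right = 0"
    unfolding right_eq by (rule Im_sum_sum_hermitian) (auto simp: hermitian mult.commute)
  moreover have "(\<Sum>i\<in>UNIV. \<Sum>j\<in>UNIV. Re (cnj (a$i$j) *
           (- \<i> * ((\<Sum>k\<in>UNIV. H$i$k * a$k$j) - (\<Sum>k\<in>UNIV. a$i$k * H$k$j)))))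
      = Re (- \<i> * (left - right))"
    by (simp add: left_def right_def algebra_simps sum_subtractf sum_distrib_left flip: Re_sum)
  ultimately show ?thesis by simp
qed

definition dissipation :: "('n::finite \<Rightarrow> nat) \<Rightarrow> real \<Rightarrow> real \<Rightarrow> real \<Rightarrow> complex^'n^'n \<Rightarrow> real" where
  "dissipation idx zl zr \<beta> a = (\<Sum>i\<in>UNIV. \<Sum>j\<in>UNIV.
      (boundary_rate idx zl zr i + boundary_rate idx zl zr j + (if i = j then 0 else \<beta>)) * (cmod (a$i$j))\<^sup>2)"

lemma inner_lmap:
  fixes idx :: "'n::finite \<Rightarrow> nat"
  assumes idx: "bij_betw idx UNIV {1..CARD('n)}"
  shows "inner a (lmap idx v zl zr \<beta> a) = - dissipation idx zl zr \<beta> (a :: complex^'n^'n)"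
proof -
  have entry: "Re (cnj x * (T - complex_of_real w * x + complex_of_real \<beta> * ((if b then x else 0) - x)))
      = Re (cnj x * T) - (w + (if b then 0 else \<beta>)) * (cmod x)\<^sup>2" for x T w b
  proof -
    have "(cmod x)\<^sup>2 = Re x * Re x + Im x * Im x"
      by (metis cmod_power2 power2_eq_square)
    then show ?thesis by (cases b) (simp_all add: algebra_simps)
  qed
  have hermitian: "cnj (hmat idx v $ i $ k) = hmat idx v $ k $ i" for i k
    using hmat_sym by simp
  show ?thesis
    unfolding inner_matrix lmap_entry[OF idx] entry sum_subtractf dissipation_def
      inner_commutator_hermitian_eq_0[OF hermitian]
    by (simp add: add.assoc)
qed

lemma dissipation_nonneg:
  assumes "zl \<ge> 0" "zr \<ge> 0" "\<beta> \<ge> 0"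
  shows "dissipation idx zl zr \<beta> a \<ge> 0"
  unfolding dissipation_def using assms
  by (intro sum_nonneg mult_nonneg_nonneg) (auto simp: boundary_rate_def)

lemma dissipation_eq_0D:
  assumes "zl \<ge> 0" "zr \<ge> 0" "\<beta> > 0" and "dissipation idx zl zr \<beta> a = 0"
  shows "i \<noteq> j \<Longrightarrow> a$i$j = 0"
    and "boundary_rate idx zl zr i > 0 \<Longrightarrow> a$i$i = 0"
proof -
  define w where "w i j = boundary_rate idx zl zr i + boundary_rate idx zl zr j + (if i = j then 0 else \<beta>)"
    for i j
  have w_nonneg: "w i j \<ge> 0" for i j
    using assms(1-3) by (simp add: w_def boundary_rate_def)
  have "(\<Sum>i\<in>UNIV. \<Sum>j\<in>UNIV. w i j * (cmod (a$i$j))\<^sup>2) = 0"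
    using assms(4) by (simp add: dissipation_def w_def)
  then have "w i j * (cmod (a$i$j))\<^sup>2 = 0" for i j
    using w_nonneg by (simp add: sum_nonneg sum_nonneg_eq_0_iff)
  moreover have "w i j > 0" if "i \<noteq> j \<or> boundary_rate idx zl zr i > 0" for i j
    using that w_nonneg assms(1-3) by (auto simp: w_def boundary_rate_def)
  ultimately show "i \<noteq> j \<Longrightarrow> a$i$j = 0" and "boundary_rate idx zl zr i > 0 \<Longrightarrow> a$i$i = 0"
    by (metis mult_eq_0_iff norm_eq_zero power_not_zero less_irrefl)+
qed

lemma bij_betw_consecutive_eq_const:
  fixes idx :: "'a \<Rightarrow> nat"
  assumes idx: "bij_betw idx UNIV {1..n}"
    and step: "\<And>i j. idx j = Suc (idx i) \<Longrightarrow> d j = d i"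
  shows "d i = d j"
proof -
  have inj: "inj idx" and range: "range idx = {1..n}"
    using idx by (auto simp: bij_betw_def)
  have "{1..n} \<noteq> {}"
    using range by (metis UNIV_not_empty image_is_empty)
  then obtain i0 where i0: "idx i0 = 1"
    using range by (metis atLeastatMost_empty_iff atLeastAtMost_iff imageE le_refl)
  have "\<forall>i. idx i = Suc k \<longrightarrow> d i = d i0" for k
  proof (induction k)
    case 0
    then show ?case using i0 inj by (metis One_nat_def injD)
  next
    case (Suc k)
    show ?case
    proof (intro allI impI)
      fix i assume "idx i = Suc (Suc k)"
      moreover from this have "Suc k \<in> range idx"
        using range by (metis atLeastAtMost_iff rangeI Suc_le_lessD less_imp_le le_add1 plus_1_eq_Suc)
      then obtain i' where "idx i' = Suc k" by auto
      ultimately show "d i = d i0" using step Suc.IH by metis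
    qed
  qed
  moreover have "\<exists>k. idx x = Suc k" for x
  proof -
    have "idx x \<noteq> 0" using range by (metis atLeastAtMost_iff rangeI not_one_le_zero)
    then show ?thesis by (rule not0_implies_Suc)
  qed
  ultimately show ?thesis by metis
qed

lemma lmap_offdiagonal_entry_of_diagonal:
  fixes idx :: "'n::finite \<Rightarrow> nat"
  assumes idx: "bij_betw idx UNIV {1..CARD('n)}"
    and diagonal: "\<And>i j. i \<noteq> j \<Longrightarrow> a$i$j = 0" and "i \<noteq> j"
  shows "lmap idx v zl zr \<beta> a $ i $ j = - \<i> * hmat idx v $ i $ j * (a$j$j - a$i$i)"
proof -
  have "(\<Sum>k\<in>UNIV. hmat idx v $ i $ k * a $ k $ j) = (\<Sum>k\<in>UNIV. if k = j then hmat idx v $ i $ j * a $ j $ j else 0)"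
    by (rule sum.cong) (auto simp: diagonal)
  moreover have "(\<Sum>k\<in>UNIV. a $ i $ k * hmat idx v $ k $ j) = (\<Sum>k\<in>UNIV. if k = i then a $ i $ i * hmat idx v $ i $ j else 0)"
    by (rule sum.cong) (auto simp: diagonal)
  ultimately show ?thesis
    using \<open>i \<noteq> j\<close> by (simp add: lmap_entry[OF idx] diagonal algebra_simps)
qed

lemma boundary_rate_pos_somewhere:
  fixes idx :: "'n::finite \<Rightarrow> nat"
  assumes idx: "bij_betw idx UNIV {1..CARD('n)}" and "zl \<ge> 0" "zr \<ge> 0" "zl + zr > 0"
  obtains i where "boundary_rate idx zl zr i > 0"
proof -
  have "1 \<in> range idx" "CARD('n) \<in> range idx"
    using idx by (auto simp: bij_betw_def Suc_leI)
  then obtain i1 iN where "idx i1 = 1" "idx iN = CARD('n)" by (metis imageE)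
  then have "boundary_rate idx zl zr i1 > 0 \<or> boundary_rate idx zl zr iN > 0"
    using assms(2-4) by (auto simp: boundary_rate_def)
  then show thesis using that by blast
qed

lemma lmap_dissipation_eq_0_imp_eq_0:
  fixes idx :: "'n::finite \<Rightarrow> nat"
  assumes idx: "bij_betw idx UNIV {1..CARD('n)}"
    and rates: "zl \<ge> 0" "zr \<ge> 0" "\<beta> > 0" "zl + zr > 0"
    and a: "dissipation idx zl zr \<beta> a = 0"
    and la: "dissipation idx zl zr \<beta> (lmap idx v zl zr \<beta> a) = 0"
  shows "a = 0"
proof -
  note diagonal = dissipation_eq_0D(1)[OF rates(1-3) a]
  have "a$j$j = a$i$i" if "idx j = Suc (idx i)" for i j
  proof -
    have "i \<noteq> j" using that by auto
    have "hmat idx v $ i $ j = -1" using that \<open>i \<noteq> j\<close> by (simp add: hmat_def)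
    moreover have "lmap idx v zl zr \<beta> a $ i $ j = 0"
      using dissipation_eq_0D(1)[OF rates(1-3) la \<open>i \<noteq> j\<close>] .
    ultimately show ?thesis
      using lmap_offdiagonal_entry_of_diagonal[OF idx diagonal \<open>i \<noteq> j\<close>] by simp
  qed
  then have all_equal: "a$i$i = a$j$j" for i j
    by (rule bij_betw_consecutive_eq_const[OF idx, where d = "\<lambda>i. a$i$i"])
  obtain i0 where "boundary_rate idx zl zr i0 > 0"
    using boundary_rate_pos_somewhere[OF idx rates(1,2,4)] .
  then have "a$i0$i0 = 0" by (rule dissipation_eq_0D(2)[OF rates(1-3) a])
  then have "a$i$j = 0" for i j
    using diagonal[of i j] all_equal[of i i0] by (cases "i = j") auto
  then show "a = 0" by (simp add: vec_eq_iff)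
qed

lemma lmap_hypocoercive:
  fixes idx :: "'n::finite \<Rightarrow> nat"
  assumes idx: "bij_betw idx UNIV {1..CARD('n)}"
    and rates: "zl \<ge> 0" "zr \<ge> 0" "\<beta> > 0" "zl + zr > 0"
  shows "hypocoercive (lmap idx v zl zr \<beta> :: complex^'n^'n \<Rightarrow> _)"
proof (rule hypocoercive.intro)
  show "linear (lmap idx v zl zr \<beta>)" by (rule lmap_linear[OF idx])
  show "inner u (lmap idx v zl zr \<beta> u) \<le> 0" for u :: "complex^'n^'n"
    using dissipation_nonneg[of zl zr \<beta> idx u] rates by (simp add: inner_lmap[OF idx])
  show "u = 0" if "inner u (lmap idx v zl zr \<beta> u) = 0"
    and "inner (lmap idx v zl zr \<beta> u) (lmap idx v zl zr \<beta> (lmap idx v zl zr \<beta> u)) = 0"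
    for u :: "complex^'n^'n"
    using that by (intro lmap_dissipation_eq_0_imp_eq_0[OF idx rates]) (simp_all add: inner_lmap[OF idx])
qed

lemma hypocoercive_eigenvalue_Re_neg:
  fixes L :: "complex^'n::finite^'n \<Rightarrow> complex^'n^'n"
  assumes "hypocoercive L" and L_cscale: "\<And>c a. L (cscale c a) = cscale c (L a)"
    and "is_eigenvalue L c"
  shows "Re c < 0"
proof (rule ccontr)
  interpret hypocoercive L by fact
  assume "\<not> Re c < 0"
  obtain a where "a \<noteq> 0" and eigen: "L a = cscale c a"
    using \<open>is_eigenvalue L c\<close> unfolding is_eigenvalue_def by blast
  have "Re c * inner a a \<le> 0"
    using dissipative[of a] by (simp add: eigen inner_cscale_self)
  moreover have "inner a a > 0" using \<open>a \<noteq> 0\<close> by simp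
  ultimately have "Re c \<le> 0" by (simp add: mult_le_0_iff)
  with \<open>\<not> Re c < 0\<close> have "Re c = 0" by simp
  then have "inner a (L a) = 0" and "inner (L a) (L (L a)) = 0"
    by (simp_all add: eigen L_cscale inner_cscale_self)
  then have "a = 0" by (rule no_invariant_kernel)
  with \<open>a \<noteq> 0\<close> show False ..
qed

theorem theorem2p1:
  fixes idx :: "'n::finite \<Rightarrow> nat"
    and v :: "nat \<Rightarrow> real"
    and \<alpha>in_l \<alpha>out_l \<alpha>in_r \<alpha>out_r \<beta> :: real
  assumes N: "CARD('n) \<ge> 2"
    and idx: "bij_betw idx UNIV {1..CARD('n)}"
    and v: "bounded (range v)"
    and nonneg: "\<alpha>in_l \<ge> 0" "\<alpha>out_l \<ge> 0" "\<alpha>in_r \<ge> 0" "\<alpha>out_r \<ge> 0" "\<beta> \<ge> 0"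
    and beta_pos: "\<beta> > 0"
    and zeta_pos: "(\<alpha>in_l + \<alpha>out_l) + (\<alpha>in_r + \<alpha>out_r) > 0"
  shows "(\<forall>c. is_eigenvalue (lmap idx v (\<alpha>in_l + \<alpha>out_l) (\<alpha>in_r + \<alpha>out_r) \<beta>) c \<longrightarrow> Re c < 0)
       \<and> bij (lmap idx v (\<alpha>in_l + \<alpha>out_l) (\<alpha>in_r + \<alpha>out_r) \<beta>)
       \<and> ((\<lambda>t. op_exp t (lmap idx v (\<alpha>in_l + \<alpha>out_l) (\<alpha>in_r + \<alpha>out_r) \<beta>)) \<longlongrightarrow> 0) at_top"
proof -
  have hypocoercive: "hypocoercive (lmap idx v (\<alpha>in_l + \<alpha>out_l) (\<alpha>in_r + \<alpha>out_r) \<beta>)"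
    using nonneg beta_pos zeta_pos by (intro lmap_hypocoercive[OF idx]) auto
  then interpret L: hypocoercive "lmap idx v (\<alpha>in_l + \<alpha>out_l) (\<alpha>in_r + \<alpha>out_r) \<beta>" .
  have eigenvalue: "Re c < 0" if "is_eigenvalue (lmap idx v (\<alpha>in_l + \<alpha>out_l) (\<alpha>in_r + \<alpha>out_r) \<beta>) c" for c
    using hypocoercive lmap_cscale[OF idx] that by (rule hypocoercive_eigenvalue_Re_neg)
  show ?thesis
    by (intro conjI allI impI eigenvalue L.bij L.op_exp_tendsto_zero)
qed

end
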